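(* In the setting described in the context, $\mathbb{E}_{v\sim h}[f(\psi^c(v))]\ge(1-\min\{2\beta,1/2\})\gamma\,F(\overline{y})$.
   Context: Let $I=\{1,\dots,n\}$ be a set of items, $B$ a positive integer, $[B]=\{1,\dots,B\}$, $[0;B]=\{0,1,\dots,B\}$; for $u,w\in[0;B]^I$, $u\le w$ means coordinatewise. Let $f:[0;B]^I\to\mathbb{R}_{\ge0}$ be monotone ($u\le w\Rightarrow f(u)\le f(w)$) and lattice submodular ($f(u\vee s\mathbf{1}_i)-f(u)\ge f(w\vee s\mathbf{1}_i)-f(w)$ for all $u\le w$, $s\in[0;B]$, $i\in I$, with $\vee$ the coordinatewise max and $\mathbf{1}_i$ the $i$-th unit vector). Each item $i$ has a random state $\Phi(i)\in[B]$, independent across items, with known distribution $p_i(s)=\Pr[\Phi(i)=s]$. Item $i$ in state $s$ has a nonnegative integer cost $c_i(s)$, with $c_i(s)\ge c_i(s')$ whenever $s\ge s'$. $C$ is a positive integer budget and $\mathcal{I}^{out}\subseteq 2^I$ is a downward-closed family. For $S\subseteq I$ and $\phi\in[B]^I$, $\phi_S$ equals $\phi(i)$ on $S$ and $0$ elsewhere; $\overline{f}(S)=\mathbb{E}[f(\Phi_S)]$, $F(\overline{x})=\sum_{U\subseteq I}\prod_{i\in U}\overline{x}(i)\prod_{i\notin U}(1-\overline{x}(i))\overline{f}(U)$, $P_{\mathcal{I}^{out}}=\mathrm{conv}\{\mathbf{1}_S: S\in\mathcal{I}^{out}\}$. A monotone $(\beta,\gamma)$-balanced CRS for $\mathcal{I}^{out}$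 is a (possibly randomized) scheme that, for any $\overline{z}\in\beta\cdot P_{\mathcal{I}^{out}}$ and the random set $R$ containing each $i$ independently with probability $\overline{z}(i)$, maps $R$ to $\chi(R)\subseteq R$ with $\chi(R)\in\mathcal{I}^{out}$, such that $\Pr[i\in\chi(R)\mid i\in R]\ge\gamma$ for all $i$, and for $i\in R\subseteq R'$, $\Pr[i\in\chi(R)]\ge\Pr[i\in\chi(R')]$. Assume such a scheme $\chi^{io}$ exists for given $\beta,\gamma\in[0,1]$. Problem P1: variables $x(i,t)\ge0$ for $i\in I$, $t\in\{1,\dots,C-c_i(B)\}$, $\overline{x}(i)=\sum_t x(i,t)$; maximize $F(\overline{x})$ subject to $\overline{x}(i)\le1$, $\overline{x}\in P_{\mathcal{I}^{out}}$, and for all $t\in\{1,\dots,C\}$: $\sum_{i\in I}\mathbb{E}[\min\{c_i(\Phi(i)),t\}]\sum_{t'=1}^{t}x(i,t')\le 2t$. Let $y$ be the solution of P1 computed by the stochastic continuous greedy algorithm of Asadpour and Nazerzadeh (2016) with stopping time $l=\min\{\beta,1/4\}$ and step size $\delta=o(n^{-3})$, $\overline{y}(i)=\sum_t y(i,t)$. Distribution $h$: $v\in[0;B]^I$ has independent coordinates with $\Pr[v(i)=j]=p_i(j)\overline{y}(i)$ for $j\in[B]$ and $\Pr[v(i)=0]=1-\overline{y}(i)$; $R(v)=\{i:v(i)\ne0\}$. Mapping $\psi^a$: $\psi^a(v)(i)=v(i)$ if $i\in\chi^{io}(R(v))$ (applying $\chi^{io}$ with $\overline{z}=\overline{y}$),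 else $0$. Mapping $\psi^b$: for each $i\in R(v)$ independently sample $t(i)\in\{1,\dots,C-c_i(B)\}$ with $\Pr[t(i)=t]=y(i,t)/\overline{y}(i)$; $\psi^b(v)(i)=v(i)$ if $i\in R(v)$ and $\sum_{i'\in R(v)\setminus\{i\},\,t(i')\le t(i)}c_{i'}(v(i'))\le t(i)$, else $0$. Mapping $\psi^c$: apply $\psi^a$ and $\psi^b$ to $v$ independently and set $\psi^c(v)(i)=v(i)$ if $\psi^a(v)(i)=v(i)$ and $\psi^b(v)(i)=v(i)$, and $0$ otherwise. The expectation is over $v\sim h$ and the internal randomness of $\psi^c$. *)

theory Defs
  imports "HOL-Analysis.Analysis" "HOL-Probability.Probability"
begin

definition vecs :: "'i set \<Rightarrow> nat \<Rightarrow> ('i \<Rightarrow> nat) set" where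
  "vecs I B = {u. (\<forall>i\<in>I. u i \<le> B) \<and> (\<forall>i. i \<notin> I \<longrightarrow> u i = 0)}"

definition monotone_vec :: "'i set \<Rightarrow> nat \<Rightarrow> (('i \<Rightarrow> nat) \<Rightarrow> real) \<Rightarrow> bool" where
  "monotone_vec I B f \<longleftrightarrow>
     (\<forall>u\<in>vecs I B. \<forall>w\<in>vecs I B. u \<le> w \<longrightarrow> f u \<le> f w)"

text \<open>Lattice submodularity; u \<or> s 1_i is u(i := max (u i) s).\<close>
definition lattice_submodular :: "'i set \<Rightarrow> nat \<Rightarrow> (('i \<Rightarrow> nat) \<Rightarrow> real) \<Rightarrow> bool" where
  "lattice_submodular I B f \<longleftrightarrow>
     (\<forall>u\<in>vecs I B. \<forall>w\<in>vecs I B. \<forall>s\<in>{0..B}. \<forall>i\<in>I. u \<le> w \<longrightarrow>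
        f (u(i := max (u i) s)) - f u \<ge> f (w(i := max (w i) s)) - f w)"

definition restr_state :: "('i \<Rightarrow> nat) \<Rightarrow> 'i set \<Rightarrow> ('i \<Rightarrow> nat)" where
  "restr_state \<phi> S = (\<lambda>i. if i \<in> S then \<phi> i else 0)"

text \<open>fbar(S) = E[f(Phi_S)], Phi(i) in [B] independent with Pr[Phi(i)=s] = p i s.\<close>
definition fbar :: "'i set \<Rightarrow> nat \<Rightarrow> ('i \<Rightarrow> nat \<Rightarrow> real) \<Rightarrow> (('i \<Rightarrow> nat) \<Rightarrow> real)
    \<Rightarrow> 'i set \<Rightarrow> real" where
  "fbar I B p f S =
     (\<Sum>\<phi>\<in>PiE I (\<lambda>_. {1..B}). (\<Prod>i\<in>I. p i (\<phi> i)) * f (restr_state \<phi> S))"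

definition multilinear_ext :: "'i set \<Rightarrow> ('i set \<Rightarrow> real) \<Rightarrow> ('i \<Rightarrow> real) \<Rightarrow> real" where
  "multilinear_ext I g x =
     (\<Sum>U\<in>Pow I. (\<Prod>i\<in>U. x i) * (\<Prod>i\<in>I - U. 1 - x i) * g U)"

definition indicator_polytope :: "'i set set \<Rightarrow> ('i \<Rightarrow> real) set" where
  "indicator_polytope A = {x. \<exists>w. (\<forall>S\<in>A. w S \<ge> 0) \<and> sum w A = 1 \<and>
        x = (\<lambda>i. \<Sum>S\<in>A. w S * indicator S i)}"

definition scaled_set :: "real \<Rightarrow> ('i \<Rightarrow> real) set \<Rightarrow> ('i \<Rightarrow> real) set" where
  "scaled_set \<beta> P = (\<lambda>x. (\<lambda>i. \<beta> * x i)) ` P"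

definition downward_closed :: "'i set \<Rightarrow> 'i set set \<Rightarrow> bool" where
  "downward_closed I A \<longleftrightarrow> A \<subseteq> Pow I \<and> (\<forall>S\<in>A. \<forall>T. T \<subseteq> S \<longrightarrow> T \<in> A)"

definition set_prob :: "'i set \<Rightarrow> ('i \<Rightarrow> real) \<Rightarrow> 'i set \<Rightarrow> real" where
  "set_prob I z R = (\<Prod>i\<in>R. z i) * (\<Prod>i\<in>I - R. 1 - z i)"

text \<open>Monotone (beta,gamma)-balanced CRS: chi z R is the (random) output of the scheme
  applied with vector z to R.  The balancedness condition
  Pr[i in chi(R) | i in R] >= gamma is written as Pr[i in chi(R) and i in R] >= gamma * z i.\<close>
definition monotone_balanced_CRS ::
    "'i set \<Rightarrow> 'i set set \<Rightarrow> real \<Rightarrow> real \<Rightarrow> (('i \<Rightarrow> real) \<Rightarrow> 'i set \<Rightarrow> 'i set pmf) \<Rightarrow> bool" where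
  "monotone_balanced_CRS I A \<beta> \<gamma> chi \<longleftrightarrow>
     (\<forall>z\<in>scaled_set \<beta> (indicator_polytope A).
        (\<forall>R\<in>Pow I. set_pmf (chi z R) \<subseteq> {T. T \<subseteq> R \<and> T \<in> A}) \<and>
        (\<forall>i\<in>I. (\<Sum>R\<in>{R\<in>Pow I. i \<in> R}. set_prob I z R * measure_pmf.prob (chi z R) {T. i \<in> T})
                 \<ge> \<gamma> * z i) \<and>
        (\<forall>i R R'. i \<in> R \<longrightarrow> R \<subseteq> R' \<longrightarrow> R' \<subseteq> I \<longrightarrow>
                 measure_pmf.prob (chi z R) {T. i \<in> T} \<ge> measure_pmf.prob (chi z R') {T. i \<in> T}))"

definition exp_min_cost :: "nat \<Rightarrow> ('i \<Rightarrow> nat \<Rightarrow> real) \<Rightarrow> ('i \<Rightarrow> nat \<Rightarrow> nat) \<Rightarrow> 'i \<Rightarrow> nat \<Rightarrow> real" where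
  "exp_min_cost B p c i t = (\<Sum>s\<in>{1..B}. p i s * real (min (c i s) t))"

definition xbar :: "nat \<Rightarrow> nat \<Rightarrow> ('i \<Rightarrow> nat \<Rightarrow> nat) \<Rightarrow> ('i \<Rightarrow> nat \<Rightarrow> real) \<Rightarrow> 'i \<Rightarrow> real" where
  "xbar B C c x i = (\<Sum>t\<in>{1..C - c i B}. x i t)"

definition P1_feasible :: "'i set \<Rightarrow> nat \<Rightarrow> ('i \<Rightarrow> nat \<Rightarrow> real) \<Rightarrow> ('i \<Rightarrow> nat \<Rightarrow> nat) \<Rightarrow> nat
    \<Rightarrow> 'i set set \<Rightarrow> ('i \<Rightarrow> nat \<Rightarrow> real) \<Rightarrow> bool" where
  "P1_feasible I B p c C A x \<longleftrightarrow>
     (\<forall>i t. (i \<in> I \<and> t \<in> {1..C - c i B}) \<longrightarrow> x i t \<ge> 0) \<and>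
     (\<forall>i t. \<not> (i \<in> I \<and> t \<in> {1..C - c i B}) \<longrightarrow> x i t = 0) \<and>
     (\<forall>i\<in>I. xbar B C c x i \<le> 1) \<and>
     xbar B C c x \<in> indicator_polytope A \<and>
     (\<forall>t\<in>{1..C}. (\<Sum>i\<in>I. exp_min_cost B p c i t * (\<Sum>t'\<in>{1..t}. x i t')) \<le> 2 * real t)"

definition h_prob :: "'i set \<Rightarrow> ('i \<Rightarrow> nat \<Rightarrow> real) \<Rightarrow> ('i \<Rightarrow> real) \<Rightarrow> ('i \<Rightarrow> nat) \<Rightarrow> real" where
  "h_prob I p yb v = (\<Prod>i\<in>I. if v i = 0 then 1 - yb i else p i (v i) * yb i)"

definition Rset :: "'i set \<Rightarrow> ('i \<Rightarrow> nat) \<Rightarrow> 'i set" where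
  "Rset I v = {i\<in>I. v i \<noteq> 0}"

definition keep_b :: "'i set \<Rightarrow> ('i \<Rightarrow> nat \<Rightarrow> nat) \<Rightarrow> ('i \<Rightarrow> nat) \<Rightarrow> ('i \<Rightarrow> nat) \<Rightarrow> 'i \<Rightarrow> bool" where
  "keep_b I c v tt i \<longleftrightarrow> i \<in> Rset I v \<and>
     (\<Sum>i'\<in>{i'\<in>Rset I v - {i}. tt i' \<le> tt i}. c i' (v i')) \<le> tt i"

definition psi_c :: "'i set \<Rightarrow> ('i \<Rightarrow> nat \<Rightarrow> nat) \<Rightarrow> ('i \<Rightarrow> nat) \<Rightarrow> 'i set \<Rightarrow> ('i \<Rightarrow> nat)
    \<Rightarrow> ('i \<Rightarrow> nat)" where
  "psi_c I c v T tt = (\<lambda>i. if i \<in> T \<and> keep_b I c v tt i then v i else 0)"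

text \<open>E_{v ~ h}[f(psi^c(v))], expectation also over the randomness of chi^io and the t(i).\<close>
definition expected_psi_c ::
    "'i set \<Rightarrow> nat \<Rightarrow> ('i \<Rightarrow> nat \<Rightarrow> real) \<Rightarrow> ('i \<Rightarrow> nat \<Rightarrow> nat) \<Rightarrow> nat
     \<Rightarrow> (('i \<Rightarrow> real) \<Rightarrow> 'i set \<Rightarrow> 'i set pmf) \<Rightarrow> (('i \<Rightarrow> nat) \<Rightarrow> real)
     \<Rightarrow> ('i \<Rightarrow> nat \<Rightarrow> real) \<Rightarrow> real" where
  "expected_psi_c I B p c C chi f y =
     (let yb = xbar B C c y in
      \<Sum>v\<in>vecs I B. h_prob I p yb v *
        (\<Sum>tt\<in>PiE (Rset I v) (\<lambda>i. {1..C - c i B}).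
           (\<Prod>i\<in>Rset I v. y i (tt i) / yb i) *
           (\<Sum>T\<in>Pow (Rset I v). pmf (chi yb (Rset I v)) T * f (psi_c I c v T tt))))"

end

theory Submission
  imports Defs
begin

text \<open>Order the items as \<open>i\<^sub>1, ..., i\<^sub>n\<close> and telescope \<open>f(v) = f(0) + \<Sum>\<^sub>k \<Delta>\<^sub>k(v)\<close>, where
  \<open>\<Delta>\<^sub>k(v)\<close> is the gain of adding the state of \<open>i\<^sub>k\<close> to those of \<open>i\<^sub>1, ..., i\<^sub>k\<^sub>-\<^sub>1\<close>.
  Drawing \<open>v \<sim> h\<close> amounts to drawing \<open>R\<close> with marginals \<open>yb\<close> and then the states, so
  \<open>F(yb) = E[f(v)] = f(0) + \<Sum>\<^sub>k E[\<Delta>\<^sub>k(v)]\<close>; and by submodularity \<open>f(\<psi>\<^sup>c(v))\<close> is at least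
  \<open>f(0)\<close> plus the gains \<open>\<Delta>\<^sub>k(v)\<close> of the items kept by both \<open>\<psi>\<^sup>a\<close> and \<open>\<psi>\<^sup>b\<close>.

  Fix \<open>k\<close> and the state of \<open>i\<^sub>k\<close>. As functions of the other coordinates of \<open>v\<close>, the gain
  \<open>\<Delta>\<^sub>k\<close> (submodularity), the probability that \<open>\<chi>\<close> keeps \<open>i\<^sub>k\<close> (monotonicity of the scheme)
  and the indicator that \<open>\<psi>\<^sup>b\<close> keeps \<open>i\<^sub>k\<close> (monotonicity of the costs) are all antitone, so by
  Harris' inequality the expectation of their product is at least the product of their
  expectations. The second factor has expectation at least \<open>\<gamma>\<close> by balancedness, the third at
  least \<open>1 - 2l\<close>, \<open>l = min \<beta> (1/4)\<close>, by a Markov bound on the truncated load scheduled before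
  \<open>i\<^sub>k\<close>, which the time-indexed knapsack constraints of P1 control.\<close>

section \<open>Expectations under product distributions\<close>

definition Pi_dflt :: "'j set \<Rightarrow> ('j \<Rightarrow> 'a set) \<Rightarrow> 'a \<Rightarrow> ('j \<Rightarrow> 'a) set" where
  "Pi_dflt J D d = {x. (\<forall>j\<in>J. x j \<in> D j) \<and> (\<forall>j. j \<notin> J \<longrightarrow> x j = d)}"

definition prod_expect ::
    "'j set \<Rightarrow> ('j \<Rightarrow> 'a set) \<Rightarrow> 'a \<Rightarrow> ('j \<Rightarrow> 'a \<Rightarrow> real) \<Rightarrow> (('j \<Rightarrow> 'a) \<Rightarrow> real) \<Rightarrow> real" where
  "prod_expect J D d q g = (\<Sum>x\<in>Pi_dflt J D d. (\<Prod>j\<in>J. q j (x j)) * g x)"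

definition pmf_family :: "'j set \<Rightarrow> ('j \<Rightarrow> 'a set) \<Rightarrow> ('j \<Rightarrow> 'a \<Rightarrow> real) \<Rightarrow> bool" where
  "pmf_family J D q \<longleftrightarrow> (\<forall>j\<in>J. finite (D j) \<and> (\<forall>s\<in>D j. 0 \<le> q j s) \<and> sum (q j) (D j) = 1)"

lemma pmf_familyD:
  assumes "pmf_family J D q" "j \<in> J"
  shows "finite (D j)" "s \<in> D j \<Longrightarrow> 0 \<le> q j s" "sum (q j) (D j) = 1"
  using assms unfolding pmf_family_def by auto

lemma pmf_family_subset: "pmf_family J D q \<Longrightarrow> J' \<subseteq> J \<Longrightarrow> pmf_family J' D q"
  unfolding pmf_family_def by blast

lemma Pi_dflt_empty: "Pi_dflt {} D d = {\<lambda>_. d}"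
  unfolding Pi_dflt_def by auto

lemma Pi_dflt_undefined: "Pi_dflt J D undefined = PiE J D"
  unfolding Pi_dflt_def PiE_def Pi_def extensional_def by auto

lemma Pi_dflt_upd:
  "x \<in> Pi_dflt (J - {a}) D d \<Longrightarrow> a \<in> J \<Longrightarrow> s \<in> D a \<Longrightarrow> x(a := s) \<in> Pi_dflt J D d"
  unfolding Pi_dflt_def by auto

lemma Pi_dflt_insert:
  assumes "a \<notin> J"
  shows "Pi_dflt (insert a J) D d = (\<lambda>(s, x). x(a := s)) ` (D a \<times> Pi_dflt J D d)"
proof
  show "Pi_dflt (insert a J) D d \<subseteq> (\<lambda>(s, x). x(a := s)) ` (D a \<times> Pi_dflt J D d)"
  proof
    fix x assume "x \<in> Pi_dflt (insert a J) D d"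
    then have "(x a, x(a := d)) \<in> D a \<times> Pi_dflt J D d" using assms unfolding Pi_dflt_def by auto
    then show "x \<in> (\<lambda>(s, x). x(a := s)) ` (D a \<times> Pi_dflt J D d)"
      by (rule rev_image_eqI) simp
  qed
qed (use assms in \<open>auto simp: Pi_dflt_def\<close>)

lemma inj_on_Pi_dflt_insert:
  assumes "a \<notin> J"
  shows "inj_on (\<lambda>(s, x). x(a := s)) (D a \<times> Pi_dflt J D d)"
proof (rule inj_onI, clarify)
  fix s x t y assume "x \<in> Pi_dflt J D d" "y \<in> Pi_dflt J D d" and eq: "x(a := s) = y(a := t)"
  then have "x a = y a" using assms unfolding Pi_dflt_def by auto
  with eq show "s = t \<and> x = y" by (metis fun_upd_eqD fun_upd_triv fun_upd_upd)
qed

lemma prod_expect_empty: "prod_expect {} D d q g = g (\<lambda>_. d)"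
  unfolding prod_expect_def Pi_dflt_empty by simp

lemma prod_expect_insert:
  assumes "finite J" "a \<notin> J" "\<forall>j\<in>insert a J. finite (D j)"
  shows "prod_expect (insert a J) D d q g
       = (\<Sum>s\<in>D a. q a s * prod_expect J D d q (\<lambda>x. g (x(a := s))))"
proof -
  have weight: "(\<Prod>j\<in>insert a J. q j ((x(a := s)) j)) = q a s * (\<Prod>j\<in>J. q j (x j))" for x s
  proof -
    have "(\<Prod>j\<in>J. q j ((x(a := s)) j)) = (\<Prod>j\<in>J. q j (x j))"
      using assms(2) by (intro prod.cong) auto
    then show ?thesis using assms(1,2) by simp
  qed
  have "prod_expect (insert a J) D d q g
      = (\<Sum>(s, x)\<in>D a \<times> Pi_dflt J D d. (\<Prod>j\<in>insert a J. q j ((x(a := s)) j)) * g (x(a := s)))"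
    unfolding prod_expect_def Pi_dflt_insert[OF assms(2)]
    by (subst sum.reindex[OF inj_on_Pi_dflt_insert[OF assms(2)]]) (simp add: case_prod_beta)
  also have "\<dots> = (\<Sum>s\<in>D a. q a s * prod_expect J D d q (\<lambda>x. g (x(a := s))))"
    unfolding sum.cartesian_product[symmetric] weight prod_expect_def sum_distrib_left
    by (simp add: mult.assoc)
  finally show ?thesis .
qed

lemma prod_expect_remove:
  assumes "finite J" "a \<in> J" "\<forall>j\<in>J. finite (D j)"
  shows "prod_expect J D d q g = (\<Sum>s\<in>D a. q a s * prod_expect (J - {a}) D d q (\<lambda>x. g (x(a := s))))"
  using prod_expect_insert[of "J - {a}" a D d q g] assms by (simp add: insert_absorb)

lemma prod_expect_cong:
  "(\<And>x. x \<in> Pi_dflt J D d \<Longrightarrow> g x = h x) \<Longrightarrow> prod_expect J D d q g = prod_expect J D d q h"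
  unfolding prod_expect_def by (intro sum.cong) auto

lemma prod_expect_cong_dist:
  assumes "\<And>j. j \<in> J \<Longrightarrow> D j = D' j" "\<And>j s. j \<in> J \<Longrightarrow> s \<in> D j \<Longrightarrow> q j s = q' j s"
  shows "prod_expect J D d q g = prod_expect J D' d q' g"
proof -
  have box: "Pi_dflt J D d = Pi_dflt J D' d" using assms(1) unfolding Pi_dflt_def by auto
  have "(\<Prod>j\<in>J. q j (x j)) = (\<Prod>j\<in>J. q' j (x j))" if "x \<in> Pi_dflt J D d" for x
    using that assms(2) unfolding Pi_dflt_def by (intro prod.cong) auto
  then show ?thesis unfolding prod_expect_def box by (intro sum.cong) (auto simp: box)
qed

lemma prod_expect_add: "prod_expect J D d q (\<lambda>x. g x + h x) = prod_expect J D d q g + prod_expect J D d q h"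
  unfolding prod_expect_def by (simp add: distrib_left sum.distrib)

lemma prod_expect_diff: "prod_expect J D d q (\<lambda>x. g x - h x) = prod_expect J D d q g - prod_expect J D d q h"
  unfolding prod_expect_def by (simp add: right_diff_distrib sum_subtractf)

lemma prod_expect_cmult: "prod_expect J D d q (\<lambda>x. a * g x) = a * prod_expect J D d q g"
  unfolding prod_expect_def sum_distrib_left by (simp add: mult.left_commute)

lemma prod_expect_divide: "prod_expect J D d q (\<lambda>x. g x / a) = prod_expect J D d q g / a"
  unfolding prod_expect_def sum_divide_distrib by (simp add: mult.commute)

lemma prod_expect_sum:
  "prod_expect J D d q (\<lambda>x. \<Sum>k\<in>K. g k x) = (\<Sum>k\<in>K. prod_expect J D d q (g k))"
  unfolding prod_expect_def sum_distrib_left by (rule sum.swap)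

lemma prod_expect_swap:
  "prod_expect J D d q (\<lambda>x. prod_expect J' D' d' q' (g x))
     = prod_expect J' D' d' q' (\<lambda>x'. prod_expect J D d q (\<lambda>x. g x x'))"
  unfolding prod_expect_def sum_distrib_left by (subst sum.swap) (simp add: mult_ac)

lemma prod_expect_mono:
  assumes "pmf_family J D q" "\<And>x. x \<in> Pi_dflt J D d \<Longrightarrow> g x \<le> h x"
  shows "prod_expect J D d q g \<le> prod_expect J D d q h"
proof -
  have "0 \<le> (\<Prod>j\<in>J. q j (x j))" if "x \<in> Pi_dflt J D d" for x
    using that assms(1) unfolding Pi_dflt_def pmf_family_def by (auto intro: prod_nonneg)
  then show ?thesis unfolding prod_expect_def using assms(2) by (intro sum_mono mult_left_mono) auto
qed

lemma prod_expect_nonneg: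
  "pmf_family J D q \<Longrightarrow> (\<And>x. x \<in> Pi_dflt J D d \<Longrightarrow> 0 \<le> g x) \<Longrightarrow> 0 \<le> prod_expect J D d q g"
  using prod_expect_mono[where g = "\<lambda>_. 0" and h = g] by (simp add: prod_expect_def)

lemma prod_expect_const:
  "finite J \<Longrightarrow> pmf_family J D q \<Longrightarrow> prod_expect J D d q (\<lambda>_. a) = a"
proof (induction J rule: finite_induct)
  case (insert j J)
  then show ?case
    by (simp add: prod_expect_insert pmf_family_def sum_distrib_right[symmetric])
qed (simp add: prod_expect_empty)

lemma prod_expect_coord:
  assumes "finite J" "pmf_family J D q" "a \<in> J"
  shows "prod_expect J D d q (\<lambda>x. g (x a)) = (\<Sum>s\<in>D a. q a s * g s)"
  using assms pmf_family_subset[OF assms(2), of "J - {a}"]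
  by (simp add: prod_expect_remove pmf_family_def prod_expect_const)

lemma prod_expect_marginal:
  assumes "finite F" "F \<inter> J = {}" "finite J" "pmf_family (J \<union> F) D q"
  shows "prod_expect (J \<union> F) D d q (\<lambda>x. g (\<lambda>j. if j \<in> J then x j else d)) = prod_expect J D d q g"
  using assms
proof (induction F rule: finite_induct)
  case empty
  have "prod_expect J D d q (\<lambda>x. g (\<lambda>j. if j \<in> J then x j else d)) = prod_expect J D d q g"
    by (rule prod_expect_cong) (auto simp: Pi_dflt_def intro!: arg_cong[where f = g])
  then show ?case by simp
next
  case (insert a F)
  have restr: "(\<lambda>j. if j \<in> J then (x(a := s)) j else d) = (\<lambda>j. if j \<in> J then x j else d)" for x s
    using insert.prems(1) by auto
  have "prod_expect (J \<union> insert a F) D d q (\<lambda>x. g (\<lambda>j. if j \<in> J then x j else d))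
      = (\<Sum>s\<in>D a. q a s * prod_expect (J \<union> F) D d q (\<lambda>x. g (\<lambda>j. if j \<in> J then x j else d)))"
    using insert.hyps insert.prems
    by (simp add: prod_expect_insert restr pmf_family_def)
  also have "\<dots> = (\<Sum>s\<in>D a. q a s) * prod_expect J D d q g"
  proof -
    have "pmf_family (J \<union> F) D q" using insert.prems(3) by (rule pmf_family_subset) auto
    then show ?thesis using insert.IH insert.prems(1,2) by (simp add: sum_distrib_right)
  qed
  finally show ?case using insert.prems(3) by (simp add: pmf_familyD)
qed

lemma weighted_chebyshev_antimono:
  fixes G H :: "'a::linorder \<Rightarrow> real"
  assumes "\<forall>s\<in>S. 0 \<le> q s" "sum q S = 1"
    and "antimono_on S G" "antimono_on S H"
  shows "(\<Sum>s\<in>S. q s * G s) * (\<Sum>s\<in>S. q s * H s) \<le> (\<Sum>s\<in>S. q s * (G s * H s))"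
proof -
  have same_sign: "0 \<le> (G s - G t) * (H s - H t)" if "s \<in> S" "t \<in> S" for s t
  proof (cases "s \<le> t")
    case True
    have "G t \<le> G s" "H t \<le> H s"
      using monotone_onD[OF assms(3) that True] monotone_onD[OF assms(4) that True] by simp_all
    then show ?thesis by (intro mult_nonneg_nonneg) auto
  next
    case False
    then have "t \<le> s" by simp
    have "G s \<le> G t" "H s \<le> H t"
      using monotone_onD[OF assms(3) that(2,1) \<open>t \<le> s\<close>] monotone_onD[OF assms(4) that(2,1) \<open>t \<le> s\<close>]
      by simp_all
    then show ?thesis by (intro mult_nonpos_nonpos) auto
  qed
  text \<open>Expanding the double sum gives twice the difference of the two sides.\<close>
  have "0 \<le> (\<Sum>s\<in>S. \<Sum>t\<in>S. q s * q t * ((G s - G t) * (H s - H t)))"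
    using assms(1) same_sign by (intro sum_nonneg) (metis mult_nonneg_nonneg)
  also have "\<dots> = (\<Sum>s\<in>S. \<Sum>t\<in>S. q s * (G s * H s) * q t) + (\<Sum>s\<in>S. \<Sum>t\<in>S. q t * (G t * H t) * q s)
        - (\<Sum>s\<in>S. \<Sum>t\<in>S. (q s * G s) * (q t * H t)) - (\<Sum>s\<in>S. \<Sum>t\<in>S. (q t * G t) * (q s * H s))"
    by (simp add: sum.distrib sum_subtractf algebra_simps)
  also have "(\<Sum>s\<in>S. \<Sum>t\<in>S. q s * (G s * H s) * q t) = (\<Sum>s\<in>S. q s * (G s * H s))"
    using assms(2) by (simp add: sum_distrib_left[symmetric])
  also have "(\<Sum>s\<in>S. \<Sum>t\<in>S. q t * (G t * H t) * q s) = (\<Sum>s\<in>S. q s * (G s * H s))"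
    using assms(2) by (simp add: sum_distrib_right[symmetric] sum_distrib_left[symmetric])
  also have "(\<Sum>s\<in>S. \<Sum>t\<in>S. (q s * G s) * (q t * H t)) = (\<Sum>s\<in>S. q s * G s) * (\<Sum>s\<in>S. q s * H s)"
    by (simp add: sum_product)
  also have "(\<Sum>s\<in>S. \<Sum>t\<in>S. (q t * G t) * (q s * H s)) = (\<Sum>s\<in>S. q s * G s) * (\<Sum>s\<in>S. q s * H s)"
    unfolding sum_product by (rule sum.swap)
  finally show ?thesis by simp
qed

lemma antimono_on_mult:
  fixes g h :: "'a::order \<Rightarrow> real"
  assumes "antimono_on A g" "antimono_on A h" "\<And>x. x \<in> A \<Longrightarrow> 0 \<le> g x" "\<And>x. x \<in> A \<Longrightarrow> 0 \<le> h x"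
  shows "antimono_on A (\<lambda>x. g x * h x)"
proof (rule monotone_onI)
  fix x y assume "x \<in> A" "y \<in> A" "x \<le> y"
  then show "g y * h y \<le> g x * h x"
    using assms monotone_onD[OF assms(1)] monotone_onD[OF assms(2)] by (intro mult_mono) auto
qed

theorem harris_inequality:
  fixes D :: "'j \<Rightarrow> 'a::linorder set"
  assumes "finite J" "pmf_family J D q"
    and "antimono_on (Pi_dflt J D d) g" "antimono_on (Pi_dflt J D d) h"
  shows "prod_expect J D d q g * prod_expect J D d q h \<le> prod_expect J D d q (\<lambda>x. g x * h x)"
  using assms
proof (induction J arbitrary: g h rule: finite_induct)
  case empty
  then show ?case by (simp add: prod_expect_empty)
next
  case (insert a J)
  let ?E = "prod_expect J D d q"
  have fam: "pmf_family J D q" using insert.prems(1) by (rule pmf_family_subset) auto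
  have upd: "x(a := s) \<in> Pi_dflt (insert a J) D d" if "x \<in> Pi_dflt J D d" "s \<in> D a" for x s
    using that insert.hyps(2) by (intro Pi_dflt_upd) (auto simp: insert_Diff_if)
  have slice: "antimono_on (Pi_dflt J D d) (\<lambda>x. k (x(a := s)))"
    if "antimono_on (Pi_dflt (insert a J) D d) k" "s \<in> D a" for k :: "_ \<Rightarrow> real" and s
    by (rule monotone_onI, rule monotone_onD[OF that(1)]) (use that upd in \<open>auto simp: le_fun_def\<close>)
  have along_a: "antimono_on (D a) (\<lambda>s. ?E (\<lambda>x. k (x(a := s))))"
    if "antimono_on (Pi_dflt (insert a J) D d) k" for k :: "_ \<Rightarrow> real"
    by (rule monotone_onI, rule prod_expect_mono[OF fam], rule monotone_onD[OF that])
      (use upd in \<open>auto simp: le_fun_def\<close>)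
  have "(\<Sum>s\<in>D a. q a s * ?E (\<lambda>x. g (x(a := s)))) * (\<Sum>s\<in>D a. q a s * ?E (\<lambda>x. h (x(a := s))))
      \<le> (\<Sum>s\<in>D a. q a s * (?E (\<lambda>x. g (x(a := s))) * ?E (\<lambda>x. h (x(a := s)))))"
    using insert.prems by (intro weighted_chebyshev_antimono along_a) (auto simp: pmf_family_def)
  also have "\<dots> \<le> (\<Sum>s\<in>D a. q a s * ?E (\<lambda>x. g (x(a := s)) * h (x(a := s))))"
  proof (rule sum_mono)
    fix s assume s: "s \<in> D a"
    have "0 \<le> q a s" using insert.prems(1) s by (simp add: pmf_family_def)
    then show "q a s * (?E (\<lambda>x. g (x(a := s))) * ?E (\<lambda>x. h (x(a := s))))
        \<le> q a s * ?E (\<lambda>x. g (x(a := s)) * h (x(a := s)))"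
      by (rule mult_left_mono[OF insert.IH[OF fam slice[OF insert.prems(2) s] slice[OF insert.prems(3) s]]])
  qed
  finally show ?case
    using insert.hyps insert.prems(1) by (simp add: prod_expect_insert pmf_family_def)
qed

corollary harris_inequality_3:
  fixes D :: "'j \<Rightarrow> 'a::linorder set"
  assumes "finite J" "pmf_family J D q"
    and "antimono_on (Pi_dflt J D d) g" "antimono_on (Pi_dflt J D d) h" "antimono_on (Pi_dflt J D d) k"
    and "\<And>x. x \<in> Pi_dflt J D d \<Longrightarrow> 0 \<le> g x" "\<And>x. x \<in> Pi_dflt J D d \<Longrightarrow> 0 \<le> h x"
    and "\<And>x. x \<in> Pi_dflt J D d \<Longrightarrow> 0 \<le> k x"
  shows "prod_expect J D d q g * prod_expect J D d q h * prod_expect J D d q k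
       \<le> prod_expect J D d q (\<lambda>x. g x * h x * k x)"
proof -
  have "prod_expect J D d q g * prod_expect J D d q h * prod_expect J D d q k
      \<le> prod_expect J D d q (\<lambda>x. g x * h x) * prod_expect J D d q k"
    using harris_inequality[OF assms(1-4)] prod_expect_nonneg[OF assms(2,8)] by (rule mult_right_mono)
  also have "\<dots> \<le> prod_expect J D d q (\<lambda>x. g x * h x * k x)"
    using assms by (intro harris_inequality antimono_on_mult) auto
  finally show ?thesis .
qed

section \<open>The distribution \<open>h\<close>\<close>

definition state_prob :: "('i \<Rightarrow> nat \<Rightarrow> real) \<Rightarrow> ('i \<Rightarrow> real) \<Rightarrow> 'i \<Rightarrow> nat \<Rightarrow> real" where
  "state_prob p z i s = (if s = 0 then 1 - z i else p i s * z i)"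

lemma h_prob_eq_prod_state_prob: "h_prob I p z v = (\<Prod>i\<in>I. state_prob p z i (v i))"
  unfolding h_prob_def state_prob_def ..

lemma sum_Pow_containing:
  assumes "a \<notin> J"
  shows "(\<Sum>R\<in>{R\<in>Pow (insert a J). a \<in> R}. F R) = (\<Sum>U\<in>Pow J. F (insert a U))"
proof -
  have "inj_on (insert a) (Pow J)"
  proof (rule inj_onI)
    fix U V assume "U \<in> Pow J" "V \<in> Pow J" "insert a U = insert a V"
    moreover have "a \<notin> U" "a \<notin> V" using assms \<open>U \<in> Pow J\<close> \<open>V \<in> Pow J\<close> by auto
    ultimately show "U = V" by (metis insert_ident)
  qed
  moreover have "{R\<in>Pow (insert a J). a \<in> R} = insert a ` Pow J"
  proof
    show "{R\<in>Pow (insert a J). a \<in> R} \<subseteq> insert a ` Pow J"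
    proof
      fix R assume "R \<in> {R\<in>Pow (insert a J). a \<in> R}"
      then have "R = insert a (R - {a})" "R - {a} \<in> Pow J" by auto
      then show "R \<in> insert a ` Pow J" by blast
    qed
  qed auto
  ultimately show ?thesis by (simp add: sum.reindex)
qed

lemma sum_Pow_insert:
  assumes "finite J" "a \<notin> J"
  shows "(\<Sum>U\<in>Pow (insert a J). F U) = (\<Sum>U\<in>Pow J. F U) + (\<Sum>U\<in>Pow J. F (insert a U))"
proof -
  have "Pow (insert a J) = Pow J \<union> {R\<in>Pow (insert a J). a \<in> R}" by blast
  then have "(\<Sum>U\<in>Pow (insert a J). F U) = (\<Sum>U\<in>Pow J \<union> {R\<in>Pow (insert a J). a \<in> R}. F U)"
    by (simp only:)
  also have "\<dots> = (\<Sum>U\<in>Pow J. F U) + (\<Sum>R\<in>{R\<in>Pow (insert a J). a \<in> R}. F R)"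
    using assms by (intro sum.union_disjoint) auto
  finally show ?thesis unfolding sum_Pow_containing[OF assms(2)] .
qed

lemma set_prob_insert_out:
  assumes "finite J" "a \<notin> J" "U \<subseteq> J"
  shows "set_prob (insert a J) z U = (1 - z a) * set_prob J z U"
proof -
  have "insert a J - U = insert a (J - U)" using assms by auto
  then have "(\<Prod>i\<in>insert a J - U. 1 - z i) = (1 - z a) * (\<Prod>i\<in>J - U. 1 - z i)"
    using assms by simp
  then show ?thesis unfolding set_prob_def by (simp only: mult.left_commute)
qed

lemma set_prob_insert_in:
  assumes "finite J" "a \<notin> J" "U \<subseteq> J"
  shows "set_prob (insert a J) z (insert a U) = z a * set_prob J z U"
proof -
  have "insert a J - insert a U = J - U" "finite U" "a \<notin> U" using assms finite_subset by auto
  then show ?thesis unfolding set_prob_def by (simp add: mult.assoc)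
qed

lemma prod_expect_restr_state_notin:
  assumes "finite J" "a \<notin> J" "U \<subseteq> J" "finite D" "sum (p a) D = 1"
  shows "prod_expect (insert a J) (\<lambda>_. D) undefined p (\<lambda>\<phi>. g (restr_state \<phi> U))
       = prod_expect J (\<lambda>_. D) undefined p (\<lambda>\<phi>. g ((restr_state \<phi> U)(a := 0)))"
proof -
  have "restr_state (\<phi>(a := s)) U = (restr_state \<phi> U)(a := 0)" for \<phi> s
    using assms(2,3) unfolding restr_state_def by (intro ext) auto
  then show ?thesis using assms by (simp add: prod_expect_insert sum_distrib_right[symmetric])
qed

lemma prod_expect_restr_state_insert:
  assumes "finite J" "a \<notin> J" "finite D"
  shows "prod_expect (insert a J) (\<lambda>_. D) undefined p (\<lambda>\<phi>. g (restr_state \<phi> (insert a U)))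
       = (\<Sum>s\<in>D. p a s * prod_expect J (\<lambda>_. D) undefined p (\<lambda>\<phi>. g ((restr_state \<phi> U)(a := s))))"
proof -
  have "restr_state (\<phi>(a := s)) (insert a U) = (restr_state \<phi> U)(a := s)" for \<phi> s
    unfolding restr_state_def by (intro ext) auto
  then show ?thesis using assms by (simp add: prod_expect_insert)
qed

text \<open>Drawing \<open>v \<sim> h\<close> is the same as drawing the set \<open>R(v)\<close> with marginals \<open>z\<close> and,
  independently, all states \<open>\<Phi>\<close>, and setting \<open>v = \<Phi>\<^sub>R\<close>.\<close>
lemma prod_expect_state_prob:
  assumes "finite J" "\<forall>j\<in>J. (\<Sum>s\<in>{1..B}. p j s) = 1"
  shows "prod_expect J (\<lambda>_. {0..B}) 0 (state_prob p z) g
       = (\<Sum>U\<in>Pow J. set_prob J z U * prod_expect J (\<lambda>_. {1..B}) undefined p (\<lambda>\<phi>. g (restr_state \<phi> U)))"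
  using assms
proof (induction J arbitrary: g rule: finite_induct)
  case empty
  show ?case by (simp add: prod_expect_empty set_prob_def restr_state_def)
next
  case (insert a J)
  let ?E = "prod_expect J (\<lambda>_. {1..B}) undefined p"
  define R where "R g = (\<Sum>U\<in>Pow J. set_prob J z U * ?E (\<lambda>\<phi>. g (restr_state \<phi> U)))" for g
  have "prod_expect (insert a J) (\<lambda>_. {0..B}) 0 (state_prob p z) g
      = (\<Sum>s\<in>{0..B}. state_prob p z a s * R (\<lambda>x. g (x(a := s))))"
    using insert by (simp add: prod_expect_insert R_def)
  also have "\<dots> = (1 - z a) * R (\<lambda>x. g (x(a := 0))) + (\<Sum>s\<in>{1..B}. p a s * z a * R (\<lambda>x. g (x(a := s))))"
    by (simp add: sum.atLeast_Suc_atMost state_prob_def)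
  also have "\<dots> = (\<Sum>U\<in>Pow J. (1 - z a) * set_prob J z U * ?E (\<lambda>\<phi>. g ((restr_state \<phi> U)(a := 0))))
      + (\<Sum>U\<in>Pow J. z a * set_prob J z U * (\<Sum>s\<in>{1..B}. p a s * ?E (\<lambda>\<phi>. g ((restr_state \<phi> U)(a := s)))))"
    unfolding R_def sum_distrib_left
    by (subst (2) sum.swap) (intro arg_cong2[where f = "(+)"] sum.cong refl; simp add: mult_ac)
  also have "\<dots> = (\<Sum>U\<in>Pow (insert a J). set_prob (insert a J) z U
          * prod_expect (insert a J) (\<lambda>_. {1..B}) undefined p (\<lambda>\<phi>. g (restr_state \<phi> U)))"
    unfolding sum_Pow_insert[OF insert.hyps] using insert
    by (intro arg_cong2[where f = "(+)"] sum.cong refl)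
      (simp_all add: set_prob_insert_out set_prob_insert_in prod_expect_restr_state_notin
        prod_expect_restr_state_insert)
  finally show ?case .
qed

lemma vecs_eq_Pi_dflt: "vecs I B = Pi_dflt I (\<lambda>_. {0..B}) 0"
  unfolding vecs_def Pi_dflt_def by auto

lemma sum_pmf_of_bool:
  assumes "finite S" "set_pmf M \<subseteq> S"
  shows "(\<Sum>T\<in>S. pmf M T * of_bool (Q T)) = measure_pmf.prob M {T. Q T}"
proof -
  have "(\<Sum>T\<in>S. pmf M T * of_bool (Q T)) = (\<Sum>T\<in>S. if Q T then pmf M T else 0)"
    by (intro sum.cong) auto
  also have "\<dots> = sum (pmf M) {T\<in>S. Q T}"
    using assms(1) by (simp add: sum.inter_filter)
  also have "\<dots> = measure_pmf.prob M {T\<in>S. Q T}"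
    using assms(1) by (simp add: measure_measure_pmf_finite)
  also have "\<dots> = measure_pmf.prob M {T. Q T}"
    using assms(2) by (intro measure_pmf.finite_measure_eq_AE AE_pmfI) auto
  finally show ?thesis .
qed

lemma indicator_polytope_scale:
  assumes "finite A" "{} \<in> A" "z \<in> indicator_polytope A" "0 \<le> r" "r \<le> 1"
  shows "(\<lambda>i. r * z i) \<in> indicator_polytope A"
proof -
  obtain w where w: "\<forall>S\<in>A. 0 \<le> w S" "sum w A = 1" "z = (\<lambda>i. \<Sum>S\<in>A. w S * indicator S i)"
    using assms(3) unfolding indicator_polytope_def by blast
  define w' where "w' S = r * w S + (if S = {} then 1 - r else 0)" for S
  have "\<forall>S\<in>A. 0 \<le> w' S" using w(1) assms(4,5) by (simp add: w'_def)
  moreover have "sum w' A = 1"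
    using w(2) assms(1,2) by (simp add: w'_def sum.distrib sum_distrib_left[symmetric])
  moreover have "(\<lambda>i. r * z i) = (\<lambda>i. \<Sum>S\<in>A. w' S * indicator S i)"
  proof -
    have "(\<Sum>S\<in>A. indicator S i * (if S = {} then 1 - r else 0)) = (0::real)" for i
      by (rule sum.neutral) (auto simp: indicator_def)
    then show ?thesis unfolding w'_def w(3) by (simp add: algebra_simps sum.distrib sum_distrib_left)
  qed
  ultimately show ?thesis unfolding indicator_polytope_def by blast
qed

section \<open>Marginal gains\<close>

lemma restr_state_empty: "restr_state v {} = (\<lambda>_. 0)"
  unfolding restr_state_def by simp

lemma restr_state_full: "v \<in> vecs I B \<Longrightarrow> restr_state v I = v"
  unfolding restr_state_def vecs_def by auto

lemma restr_state_vecs: "v \<in> vecs I B \<Longrightarrow> restr_state v S \<in> vecs I B"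
  unfolding restr_state_def vecs_def by auto

lemma set_take_Suc_nth: "k < length xs \<Longrightarrow> set (take (Suc k) xs) = insert (xs ! k) (set (take k xs))"
  by (simp add: take_Suc_conv_app_nth)

lemma nth_notin_set_take: "distinct xs \<Longrightarrow> k < length xs \<Longrightarrow> xs ! k \<notin> set (take k xs)"
  using distinct_take[of xs "Suc k"] by (simp add: take_Suc_conv_app_nth)

definition marginal_gain :: "(('i \<Rightarrow> nat) \<Rightarrow> real) \<Rightarrow> 'i list \<Rightarrow> nat \<Rightarrow> ('i \<Rightarrow> nat) \<Rightarrow> real" where
  "marginal_gain f xs k v
     = f (restr_state v (set (take (Suc k) xs))) - f (restr_state v (set (take k xs)))"

lemma f_eq_sum_marginal_gain:
  assumes "set xs = I" "v \<in> vecs I B"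
  shows "f v = f (\<lambda>_. 0) + (\<Sum>k<length xs. marginal_gain f xs k v)"
  unfolding marginal_gain_def sum_lessThan_telescope[where f = "\<lambda>k. f (restr_state v (set (take k xs)))"]
  using assms by (simp add: restr_state_full restr_state_empty)

lemma marginal_gain_nonneg:
  assumes "monotone_vec I B f" "v \<in> vecs I B"
  shows "0 \<le> marginal_gain f xs k v"
proof -
  have "restr_state v (set (take k xs)) \<le> restr_state v (set (take (Suc k) xs))"
    using set_take_subset_set_take[of k "Suc k" xs] by (auto simp: restr_state_def le_fun_def)
  then have "f (restr_state v (set (take k xs))) \<le> f (restr_state v (set (take (Suc k) xs)))"
    using assms restr_state_vecs unfolding monotone_vec_def by blast
  then show ?thesis unfolding marginal_gain_def by simp
qed

lemma marginal_gain_eq_0: "k < length xs \<Longrightarrow> v (xs ! k) = 0 \<Longrightarrow> marginal_gain f xs k v = 0"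
  unfolding marginal_gain_def set_take_Suc_nth restr_state_def
  by (auto intro!: arg_cong[where f = f])

lemma marginal_gain_antimono:
  assumes "set xs \<subseteq> I" "distinct xs" "k < length xs" "lattice_submodular I B f"
    and "u \<in> vecs I B" "w \<in> vecs I B" "u \<le> w" "u (xs ! k) = w (xs ! k)"
  shows "marginal_gain f xs k w \<le> marginal_gain f xs k u"
proof -
  let ?i = "xs ! k" and ?S = "set (take k xs)"
  have i: "?i \<in> I" "?i \<notin> ?S" using assms(1-3) nth_notin_set_take[of xs k] by auto
  have add_i: "restr_state v (set (take (Suc k) xs)) = (restr_state v ?S)(?i := max (restr_state v ?S ?i) (v ?i))"
    for v
    using i(2) unfolding set_take_Suc_nth[OF assms(3)] restr_state_def by (intro ext) auto
  have "restr_state u ?S \<le> restr_state w ?S" using assms(7) by (simp add: restr_state_def le_fun_def)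
  moreover have "u ?i \<in> {0..B}" using assms(5) i(1) by (simp add: vecs_def)
  ultimately show ?thesis
    using assms(4-6,8) i(1) restr_state_vecs unfolding marginal_gain_def add_i lattice_submodular_def
    by metis
qed

lemma masked_ge_sum_marginal_gain:
  assumes "set xs = I" "distinct xs" "v \<in> vecs I B" "lattice_submodular I B f"
  shows "f (\<lambda>_. 0) + (\<Sum>k<length xs. if P (xs ! k) then marginal_gain f xs k v else 0)
       \<le> f (\<lambda>j. if P j then v j else 0)"
proof -
  define \<psi> where "\<psi> = (\<lambda>j. if P j then v j else 0)"
  have \<psi>: "\<psi> \<in> vecs I B" "\<psi> \<le> v" using assms(3) unfolding \<psi>_def vecs_def le_fun_def by auto
  have "(if P (xs ! k) then marginal_gain f xs k v else 0) \<le> marginal_gain f xs k \<psi>"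
    if "k < length xs" for k
    using that assms \<psi> marginal_gain_antimono[of xs I k B f \<psi> v] marginal_gain_eq_0[of k xs \<psi> f]
    by (auto simp: \<psi>_def)
  then have "f (\<lambda>_. 0) + (\<Sum>k<length xs. if P (xs ! k) then marginal_gain f xs k v else 0)
      \<le> f (\<lambda>_. 0) + (\<Sum>k<length xs. marginal_gain f xs k \<psi>)"
    by (intro add_left_mono sum_mono) auto
  also have "\<dots> = f \<psi>" using f_eq_sum_marginal_gain[OF assms(1) \<psi>(1)] by simp
  finally show ?thesis unfolding \<psi>_def .
qed

section \<open>The rule \<open>\<psi>\<^sup>b\<close>\<close>

lemma keep_b_restrict_times:
  "keep_b I c v (\<lambda>j. if j \<in> Rset I v then tt j else d) = keep_b I c v tt"
  unfolding keep_b_def by (intro ext conj_cong refl arg_cong2[where f = "(\<le>)"] sum.cong) auto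

lemma Rset_mono:
  assumes "u \<le> w"
  shows "Rset I u \<subseteq> Rset I w"
proof
  fix j assume "j \<in> Rset I u"
  moreover have "u j \<le> w j" using assms by (simp add: le_fun_def)
  ultimately show "j \<in> Rset I w" by (auto simp: Rset_def)
qed

lemma keep_b_antimono:
  assumes c_mono: "\<forall>i\<in>I. \<forall>s\<in>{1..B}. \<forall>s'\<in>{1..B}. s' \<le> s \<longrightarrow> c i s' \<le> c i s"
    and "finite I" "u \<le> w" "w \<in> vecs I B" "i \<in> Rset I u" "keep_b I c w tt i"
  shows "keep_b I c u tt i"
proof -
  let ?A = "\<lambda>v. {j \<in> Rset I v - {i}. tt j \<le> tt i}"
  have sub: "?A u \<subseteq> ?A w" using Rset_mono[OF assms(3)] by auto
  have fin: "finite (?A w)" using assms(2) by (auto simp: Rset_def)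
  have "(\<Sum>j\<in>?A u. c j (u j)) \<le> (\<Sum>j\<in>?A u. c j (w j))"
  proof (rule sum_mono)
    fix j assume "j \<in> ?A u"
    then have "j \<in> I" "1 \<le> u j" "u j \<le> w j" "w j \<le> B"
      using assms(3,4) by (auto simp: Rset_def le_fun_def vecs_def)
    then show "c j (u j) \<le> c j (w j)" using c_mono by auto
  qed
  also have "\<dots> \<le> (\<Sum>j\<in>?A w. c j (w j))"
    using fin sub by (rule sum_mono2) simp
  also have "\<dots> \<le> tt i" using assms(6) by (simp add: keep_b_def)
  finally show ?thesis using assms(5) by (simp add: keep_b_def)
qed

lemma sum_min_ge:
  fixes g :: "'a \<Rightarrow> nat"
  assumes "finite A" "t < (\<Sum>j\<in>A. g j)"
  shows "t \<le> (\<Sum>j\<in>A. min (g j) t)"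
proof (cases "\<exists>j\<in>A. t \<le> g j")
  case True
  then obtain j where "j \<in> A" "t \<le> g j" by blast
  then show ?thesis using assms(1) member_le_sum[of j A "\<lambda>j. min (g j) t"] by simp
next
  case False
  then have "(\<Sum>j\<in>A. min (g j) t) = (\<Sum>j\<in>A. g j)" by (intro sum.cong) auto
  then show ?thesis using assms(2) by simp
qed

locale psi_c_setting =
  fixes I :: "'i set" and B C :: nat
    and f :: "('i \<Rightarrow> nat) \<Rightarrow> real"
    and p :: "'i \<Rightarrow> nat \<Rightarrow> real"
    and c :: "'i \<Rightarrow> nat \<Rightarrow> nat"
    and Iout :: "'i set set"
    and \<beta> \<gamma> :: real
    and chi :: "('i \<Rightarrow> real) \<Rightarrow> 'i set \<Rightarrow> 'i set pmf"
    and x y :: "'i \<Rightarrow> nat \<Rightarrow> real"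
    and xs :: "'i list"
  assumes xs: "set xs = I" "distinct xs"
    and f_nonneg: "\<forall>u\<in>vecs I B. f u \<ge> 0"
    and f_mono: "monotone_vec I B f"
    and f_sub: "lattice_submodular I B f"
    and p_nonneg: "\<forall>i\<in>I. \<forall>s\<in>{1..B}. p i s \<ge> 0"
    and p_sum: "\<forall>i\<in>I. (\<Sum>s\<in>{1..B}. p i s) = 1"
    and c_mono: "\<forall>i\<in>I. \<forall>s\<in>{1..B}. \<forall>s'\<in>{1..B}. s' \<le> s \<longrightarrow> c i s' \<le> c i s"
    and Iout_dc: "downward_closed I Iout"
    and \<beta>_range: "0 \<le> \<beta>" "\<beta> \<le> 1"
    and \<gamma>_range: "0 \<le> \<gamma>" "\<gamma> \<le> 1"
    and crs: "monotone_balanced_CRS I Iout \<beta> \<gamma> chi"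
    and x_feasible: "P1_feasible I B p c C Iout x"
    and y_def: "y = (\<lambda>i t. min \<beta> (1/4) * x i t)"
begin

definition "l = min \<beta> (1/4)"

definition "yb = xbar B C c y"

abbreviation "h_state \<equiv> state_prob p yb"

text \<open>The distribution of the time \<open>t(i)\<close> sampled by \<open>\<psi>\<^sup>b\<close>. It only matters for \<open>i \<in> R(v)\<close>,
  which forces \<open>yb i > 0\<close>; otherwise it is replaced by a point mass at \<open>0\<close>.\<close>
definition "time_dom i = (if 0 < yb i then {1..C - c i B} else {0})"

definition "time_prob i t = (if 0 < yb i then y i t / yb i else 1)"

abbreviation "E_state \<equiv> prod_expect I (\<lambda>_. {0..B}) 0 h_state"

abbreviation "E_others i \<equiv> prod_expect (I - {i}) (\<lambda>_. {0..B}) 0 h_state"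

abbreviation "E_time \<equiv> prod_expect I time_dom undefined time_prob"

abbreviation "E_time_others i \<equiv> prod_expect (I - {i}) time_dom undefined time_prob"

abbreviation "others_box i \<equiv> Pi_dflt (I - {i}) (\<lambda>_. {0..B}) 0"

definition "crs_keep_prob i R = measure_pmf.prob (chi yb R) {T. i \<in> T}"

definition "avg_f_psi_c v tt = (\<Sum>T\<in>Pow (Rset I v). pmf (chi yb (Rset I v)) T * f (psi_c I c v T tt))"

abbreviation "gain \<equiv> marginal_gain f xs"

lemma finite_I: "finite I"
  using xs(1) by auto

lemma l_range: "0 \<le> l" "l \<le> 1/4" "2 * l = min (2 * \<beta>) (1/2)"
  unfolding l_def using \<beta>_range by auto

lemma x_nonneg: "0 \<le> x i t"
  using x_feasible unfolding P1_feasible_def by (cases "i \<in> I \<and> t \<in> {1..C - c i B}") auto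

lemma y_eq: "y i t = l * x i t"
  unfolding y_def l_def ..

lemma y_nonneg: "0 \<le> y i t"
  using x_nonneg l_range by (simp add: y_eq)

lemma yb_eq: "yb i = l * xbar B C c x i"
  unfolding yb_def xbar_def y_eq by (simp add: sum_distrib_left)

lemma yb_nonneg: "0 \<le> yb i"
  unfolding yb_def xbar_def by (simp add: sum_nonneg y_nonneg)

lemma yb_le_1: "i \<in> I \<Longrightarrow> yb i \<le> 1"
proof -
  assume "i \<in> I"
  then have "xbar B C c x i \<le> 1" using x_feasible unfolding P1_feasible_def by auto
  then show ?thesis using l_range yb_eq mult_le_one[of l "xbar B C c x i"]
    by (simp add: xbar_def sum_nonneg x_nonneg)
qed

lemma pmf_family_h_state: "J \<subseteq> I \<Longrightarrow> pmf_family J (\<lambda>_. {0..B}) h_state"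
proof -
  have "(\<Sum>s\<in>{0..B}. h_state i s) = 1" if "i \<in> I" for i
  proof -
    have "{0..B} = insert 0 {1..B}" by auto
    then have "(\<Sum>s\<in>{0..B}. h_state i s) = (1 - yb i) + (\<Sum>s\<in>{1..B}. p i s) * yb i"
      by (simp add: state_prob_def sum_distrib_right)
    then show ?thesis using p_sum that by simp
  qed
  moreover have "0 \<le> h_state i s" if "i \<in> I" "s \<in> {0..B}" for i s
    using that p_nonneg yb_nonneg[of i] yb_le_1[of i] by (simp add: state_prob_def)
  ultimately show "J \<subseteq> I \<Longrightarrow> ?thesis" unfolding pmf_family_def by blast
qed

lemma pmf_family_time: "pmf_family J time_dom time_prob"
  unfolding pmf_family_def time_dom_def time_prob_def
  by (auto simp: y_nonneg yb_nonneg sum_divide_distrib[symmetric] yb_def xbar_def)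

lemma yb_in_scaled_polytope: "yb \<in> scaled_set \<beta> (indicator_polytope Iout)"
proof -
  have xbar: "xbar B C c x \<in> indicator_polytope Iout"
    using x_feasible unfolding P1_feasible_def by blast
  then have "Iout \<noteq> {}" unfolding indicator_polytope_def by auto
  then have "{} \<in> Iout" using Iout_dc unfolding downward_closed_def by blast
  moreover have "finite Iout"
    using Iout_dc finite_I unfolding downward_closed_def by (meson finite_Pow_iff rev_finite_subset)
  moreover define r where "r = (if \<beta> = 0 then 0 else l / \<beta>)"
  moreover have "0 \<le> r" "r \<le> 1" using \<beta>_range l_range by (auto simp: r_def l_def)
  ultimately have "(\<lambda>i. r * xbar B C c x i) \<in> indicator_polytope Iout"
    using xbar by (intro indicator_polytope_scale)
  moreover have "yb = (\<lambda>i. \<beta> * (r * xbar B C c x i))"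
    using \<beta>_range by (auto simp: r_def yb_eq l_def fun_eq_iff)
  ultimately show ?thesis unfolding scaled_set_def by (auto intro: image_eqI)
qed

lemma crs_support: "R \<subseteq> I \<Longrightarrow> set_pmf (chi yb R) \<subseteq> Pow R"
  using crs yb_in_scaled_polytope unfolding monotone_balanced_CRS_def by blast

lemma crs_balanced:
  "i \<in> I \<Longrightarrow> \<gamma> * yb i \<le> (\<Sum>R\<in>{R\<in>Pow I. i \<in> R}. set_prob I yb R * crs_keep_prob i R)"
  using crs yb_in_scaled_polytope unfolding monotone_balanced_CRS_def crs_keep_prob_def by blast

lemma crs_keep_prob_antimono: "i \<in> R \<Longrightarrow> R \<subseteq> R' \<Longrightarrow> R' \<subseteq> I \<Longrightarrow> crs_keep_prob i R' \<le> crs_keep_prob i R"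
  using crs yb_in_scaled_polytope unfolding monotone_balanced_CRS_def crs_keep_prob_def by blast

lemma avg_f_psi_c_restrict_times:
  "avg_f_psi_c v (\<lambda>j. if j \<in> Rset I v then tt j else d) = avg_f_psi_c v tt"
  unfolding avg_f_psi_c_def psi_c_def keep_b_restrict_times ..

lemma expected_times_on_Rset_eq:
  assumes "\<And>j. j \<in> Rset I v \<Longrightarrow> 0 < yb j"
  shows "prod_expect (Rset I v) (\<lambda>i. {1..C - c i B}) undefined (\<lambda>i t. y i t / yb i) (avg_f_psi_c v)
       = E_time (avg_f_psi_c v)"
proof -
  have R: "Rset I v \<subseteq> I" "finite (Rset I v)" using finite_I by (auto simp: Rset_def)
  have "prod_expect (Rset I v) (\<lambda>i. {1..C - c i B}) undefined (\<lambda>i t. y i t / yb i) (avg_f_psi_c v)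
      = prod_expect (Rset I v) time_dom undefined time_prob (avg_f_psi_c v)"
    by (rule prod_expect_cong_dist) (auto simp: time_dom_def time_prob_def assms)
  also have "\<dots> = prod_expect (Rset I v \<union> (I - Rset I v)) time_dom undefined time_prob
        (\<lambda>tt. avg_f_psi_c v (\<lambda>j. if j \<in> Rset I v then tt j else undefined))"
    using R finite_I pmf_family_time by (intro prod_expect_marginal[symmetric]) auto
  also have "Rset I v \<union> (I - Rset I v) = I" using R by blast
  finally show ?thesis by (simp only: avg_f_psi_c_restrict_times)
qed

lemma expected_psi_c_eq: "expected_psi_c I B p c C chi f y = E_state (\<lambda>v. E_time (avg_f_psi_c v))"
proof -
  have "expected_psi_c I B p c C chi f y
      = (\<Sum>v\<in>Pi_dflt I (\<lambda>_. {0..B}) 0. (\<Prod>j\<in>I. h_state j (v j)) *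
          prod_expect (Rset I v) (\<lambda>i. {1..C - c i B}) undefined (\<lambda>i t. y i t / yb i) (avg_f_psi_c v))"
    unfolding expected_psi_c_def Let_def yb_def[symmetric] vecs_eq_Pi_dflt h_prob_eq_prod_state_prob
      prod_expect_def Pi_dflt_undefined avg_f_psi_c_def ..
  also have "\<dots> = E_state (\<lambda>v. E_time (avg_f_psi_c v))"
    unfolding prod_expect_def[of I "\<lambda>_. {0..B}"]
  proof (intro sum.cong refl)
    fix v
    show "(\<Prod>j\<in>I. h_state j (v j))
          * prod_expect (Rset I v) (\<lambda>i. {1..C - c i B}) undefined (\<lambda>i t. y i t / yb i) (avg_f_psi_c v)
        = (\<Prod>j\<in>I. h_state j (v j)) * E_time (avg_f_psi_c v)"
    proof (cases "(\<Prod>j\<in>I. h_state j (v j)) = 0")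
      case False
      text \<open>Items of \<open>R(v)\<close> have positive probability only where \<open>yb\<close> is positive.\<close>
      then have "0 < yb j" if "j \<in> Rset I v" for j
        using that finite_I yb_nonneg[of j] by (auto simp: Rset_def state_prob_def)
      then show ?thesis by (simp only: expected_times_on_Rset_eq)
    qed simp
  qed
  finally show ?thesis .
qed

lemma avg_f_psi_c_ge:
  assumes "v \<in> vecs I B"
  shows "f (\<lambda>_. 0) + (\<Sum>k<length xs. gain k v * crs_keep_prob (xs ! k) (Rset I v)
                                       * of_bool (keep_b I c v tt (xs ! k)))
       \<le> avg_f_psi_c v tt"
proof -
  let ?R = "Rset I v"
  have R: "?R \<subseteq> I" "finite (Pow ?R)" using finite_I by (auto simp: Rset_def intro: finite_subset)
  have total: "(\<Sum>T\<in>Pow ?R. pmf (chi yb ?R) T) = 1"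
    using sum_pmf_of_bool[OF R(2) crs_support[OF R(1)], of "\<lambda>_. True"] by simp
  have "f (\<lambda>_. 0) + (\<Sum>k<length xs. gain k v * crs_keep_prob (xs ! k) ?R * of_bool (keep_b I c v tt (xs ! k)))
      = f (\<lambda>_. 0) * (\<Sum>T\<in>Pow ?R. pmf (chi yb ?R) T) + (\<Sum>k<length xs. gain k v
          * of_bool (keep_b I c v tt (xs ! k)) * (\<Sum>T\<in>Pow ?R. pmf (chi yb ?R) T * of_bool (xs ! k \<in> T)))"
    unfolding total crs_keep_prob_def sum_pmf_of_bool[OF R(2) crs_support[OF R(1)]] by (simp add: mult_ac)
  also have "\<dots> = (\<Sum>T\<in>Pow ?R. pmf (chi yb ?R) T * (f (\<lambda>_. 0)
          + (\<Sum>k<length xs. if xs ! k \<in> T \<and> keep_b I c v tt (xs ! k) then gain k v else 0)))"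
    unfolding distrib_left sum.distrib sum_distrib_left sum_distrib_right
    by (subst sum.swap[of _ "{..<length xs}"]) (auto intro!: sum.cong simp: mult_ac)
  also have "\<dots> \<le> avg_f_psi_c v tt"
    unfolding avg_f_psi_c_def psi_c_def
    using masked_ge_sum_marginal_gain[OF xs assms f_sub]
    by (intro sum_mono mult_left_mono) auto
  finally show ?thesis .
qed

lemma expected_psi_c_ge_sum:
  "f (\<lambda>_. 0) + (\<Sum>k<length xs. E_state (\<lambda>v. E_time (\<lambda>tt. gain k v * crs_keep_prob (xs ! k) (Rset I v)
                                                        * of_bool (keep_b I c v tt (xs ! k)))))
     \<le> expected_psi_c I B p c C chi f y"
proof -
  have fam: "pmf_family I (\<lambda>_. {0..B}) h_state" by (rule pmf_family_h_state) simp
  have "f (\<lambda>_. 0) + (\<Sum>k<length xs. E_state (\<lambda>v. E_time (\<lambda>tt. gain k v * crs_keep_prob (xs ! k) (Rset I v)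
                                                        * of_bool (keep_b I c v tt (xs ! k)))))
      = E_state (\<lambda>v. E_time (\<lambda>tt. f (\<lambda>_. 0) + (\<Sum>k<length xs. gain k v * crs_keep_prob (xs ! k) (Rset I v)
                                                        * of_bool (keep_b I c v tt (xs ! k)))))"
    by (simp only: prod_expect_add prod_expect_sum prod_expect_const[OF finite_I fam]
        prod_expect_const[OF finite_I pmf_family_time])
  also have "\<dots> \<le> E_state (\<lambda>v. E_time (avg_f_psi_c v))"
    using fam pmf_family_time avg_f_psi_c_ge
    by (intro prod_expect_mono) (auto simp: vecs_eq_Pi_dflt)
  finally show ?thesis by (simp add: expected_psi_c_eq)
qed

lemma multilinear_ext_eq_sum_gain:
  "multilinear_ext I (fbar I B p f) yb = f (\<lambda>_. 0) + (\<Sum>k<length xs. E_state (gain k))"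
proof -
  have fam: "pmf_family I (\<lambda>_. {0..B}) h_state" by (rule pmf_family_h_state) simp
  have "multilinear_ext I (fbar I B p f) yb
      = (\<Sum>U\<in>Pow I. set_prob I yb U * prod_expect I (\<lambda>_. {1..B}) undefined p (\<lambda>\<phi>. f (restr_state \<phi> U)))"
    unfolding multilinear_ext_def fbar_def set_prob_def prod_expect_def Pi_dflt_undefined
    by (simp add: mult.assoc)
  also have "\<dots> = E_state f"
    by (rule prod_expect_state_prob[symmetric, OF finite_I p_sum])
  also have "\<dots> = E_state (\<lambda>v. f (\<lambda>_. 0) + (\<Sum>k<length xs. gain k v))"
    using f_eq_sum_marginal_gain[OF xs(1)] by (intro prod_expect_cong) (simp add: vecs_eq_Pi_dflt)
  also have "\<dots> = f (\<lambda>_. 0) + (\<Sum>k<length xs. E_state (gain k))"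
    using finite_I fam by (simp add: prod_expect_add prod_expect_sum prod_expect_const)
  finally show ?thesis .
qed

lemma upd_in_vecs: "w \<in> others_box i \<Longrightarrow> i \<in> I \<Longrightarrow> s \<le> B \<Longrightarrow> w(i := s) \<in> vecs I B"
  unfolding vecs_eq_Pi_dflt by (rule Pi_dflt_upd) auto

lemma gain_upd_antimono:
  assumes "k < length xs" "s \<le> B"
  shows "antimono_on (others_box (xs ! k)) (\<lambda>w. gain k (w(xs ! k := s)))"
proof (rule monotone_onI)
  fix w w' assume w: "w \<in> others_box (xs ! k)" "w' \<in> others_box (xs ! k)" "w \<le> w'"
  have i: "xs ! k \<in> I" using assms(1) xs(1) by auto
  have "w(xs ! k := s) \<le> w'(xs ! k := s)" using w(3) by (simp add: le_fun_def)
  then show "gain k (w'(xs ! k := s)) \<le> gain k (w(xs ! k := s))"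
    using marginal_gain_antimono[OF _ xs(2) assms(1) f_sub upd_in_vecs[OF w(1) i assms(2)]
        upd_in_vecs[OF w(2) i assms(2)]] xs(1)
    by simp
qed

lemma crs_keep_prob_upd_antimono:
  assumes "i \<in> I" "s \<noteq> 0"
  shows "antimono_on (others_box i) (\<lambda>w. crs_keep_prob i (Rset I (w(i := s))))"
proof (rule monotone_onI)
  fix w w' :: "'i \<Rightarrow> nat" assume "w \<le> w'"
  then have "w(i := s) \<le> w'(i := s)" by (simp add: le_fun_def)
  then have "Rset I (w(i := s)) \<subseteq> Rset I (w'(i := s))" by (rule Rset_mono)
  moreover have "i \<in> Rset I (w(i := s))" "Rset I (w'(i := s)) \<subseteq> I"
    using assms by (auto simp: Rset_def)
  ultimately show "crs_keep_prob i (Rset I (w'(i := s))) \<le> crs_keep_prob i (Rset I (w(i := s)))"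
    by (intro crs_keep_prob_antimono)
qed

lemma keep_b_upd_antimono:
  assumes "i \<in> I" "s \<noteq> 0" "s \<le> B"
  shows "antimono_on (others_box i) (\<lambda>w. of_bool (keep_b I c (w(i := s)) tt i) :: real)"
proof (rule monotone_onI)
  fix w w' assume w: "w \<in> others_box i" "w' \<in> others_box i" "w \<le> w'"
  have "w(i := s) \<le> w'(i := s)" using w(3) by (simp add: le_fun_def)
  moreover have "i \<in> Rset I (w(i := s))" using assms by (auto simp: Rset_def)
  ultimately have "keep_b I c (w(i := s)) tt i" if "keep_b I c (w'(i := s)) tt i"
    using keep_b_antimono[OF c_mono finite_I _ upd_in_vecs[OF w(2) assms(1,3)] _ that] by blast
  then show "of_bool (keep_b I c (w'(i := s)) tt i) \<le> (of_bool (keep_b I c (w(i := s)) tt i) :: real)"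
    by auto
qed

lemma expected_crs_keep_prob_eq:
  assumes "i \<in> I" "s \<noteq> 0"
  shows "E_others i (\<lambda>w. crs_keep_prob i (Rset I (w(i := s))))
       = (\<Sum>U\<in>Pow (I - {i}). set_prob (I - {i}) yb U * crs_keep_prob i (insert i U))"
proof -
  let ?J = "I - {i}"
  have fin: "finite ?J" using finite_I by simp
  have fam: "pmf_family ?J (\<lambda>_. {1..B}) p" using p_nonneg p_sum by (simp add: pmf_family_def)
  have Rset_upd: "Rset I ((restr_state \<phi> U)(i := s)) = insert i U"
    if "\<phi> \<in> Pi_dflt ?J (\<lambda>_. {1..B}) undefined" "U \<subseteq> ?J" for \<phi> U
    using that assms unfolding Rset_def restr_state_def Pi_dflt_def by force
  have "E_others i (\<lambda>w. crs_keep_prob i (Rset I (w(i := s))))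
      = (\<Sum>U\<in>Pow ?J. set_prob ?J yb U
          * prod_expect ?J (\<lambda>_. {1..B}) undefined p (\<lambda>\<phi>. crs_keep_prob i (Rset I ((restr_state \<phi> U)(i := s)))))"
    using fin p_sum by (intro prod_expect_state_prob) auto
  also have "\<dots> = (\<Sum>U\<in>Pow ?J. set_prob ?J yb U
          * prod_expect ?J (\<lambda>_. {1..B}) undefined p (\<lambda>_. crs_keep_prob i (insert i U)))"
    using Rset_upd by (intro sum.cong refl arg_cong2[where f = "(*)"] prod_expect_cong) auto
  finally show ?thesis by (simp only: prod_expect_const[OF fin fam])
qed

lemma expected_crs_keep_prob_ge:
  assumes "i \<in> I" "s \<noteq> 0" "0 < yb i"
  shows "\<gamma> \<le> E_others i (\<lambda>w. crs_keep_prob i (Rset I (w(i := s))))"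
proof -
  let ?J = "I - {i}"
  have J: "finite ?J" "i \<notin> ?J" "insert i ?J = I" using finite_I assms(1) by auto
  have "\<gamma> * yb i \<le> (\<Sum>R\<in>{R\<in>Pow I. i \<in> R}. set_prob I yb R * crs_keep_prob i R)"
    by (rule crs_balanced[OF assms(1)])
  also have "\<dots> = (\<Sum>U\<in>Pow ?J. set_prob I yb (insert i U) * crs_keep_prob i (insert i U))"
    using sum_Pow_containing[OF J(2), of "\<lambda>R. set_prob I yb R * crs_keep_prob i R"] J(3) by simp
  also have "\<dots> = yb i * E_others i (\<lambda>w. crs_keep_prob i (Rset I (w(i := s))))"
    unfolding expected_crs_keep_prob_eq[OF assms(1,2)] sum_distrib_left
  proof (intro sum.cong refl)
    fix U assume "U \<in> Pow ?J"
    then show "set_prob I yb (insert i U) * crs_keep_prob i (insert i U)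
        = yb i * (set_prob ?J yb U * crs_keep_prob i (insert i U))"
      using set_prob_insert_in[OF J(1,2), of U yb] J(3) by simp
  qed
  finally show ?thesis using assms(3) by (simp add: mult.commute)
qed

definition "trunc_load i tt w = (\<Sum>j\<in>I - {i}.
    of_bool (tt j \<le> tt i) * (if w j = 0 then 0 else real (min (c j (w j)) (tt i))))"

definition "load_bound i tt = (\<Sum>j\<in>I - {i}.
    of_bool (tt j \<le> tt i) * (yb j * exp_min_cost B p c j (tt i) / tt i))"

lemma exp_min_cost_nonneg: "j \<in> I \<Longrightarrow> 0 \<le> exp_min_cost B p c j t"
  unfolding exp_min_cost_def using p_nonneg by (auto intro!: sum_nonneg)

text \<open>Markov's inequality in the form used for \<open>\<psi>\<^sup>b\<close>: if \<open>i\<close> is dropped, the items scheduled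
  no later than \<open>i\<close> have total cost, truncated at \<open>t(i)\<close>, of at least \<open>t(i)\<close>.\<close>
lemma keep_b_fails_le:
  assumes "i \<in> I" "s \<noteq> 0" "1 \<le> tt i"
  shows "1 - of_bool (keep_b I c (w(i := s)) tt i) \<le> trunc_load i tt w / tt i"
proof (cases "keep_b I c (w(i := s)) tt i")
  case True
  have "0 \<le> trunc_load i tt w" unfolding trunc_load_def by (intro sum_nonneg) auto
  then show ?thesis using True by simp
next
  case False
  let ?A = "{j \<in> Rset I (w(i := s)) - {i}. tt j \<le> tt i}"
  have A: "finite (I - {i})" "?A \<subseteq> I - {i}" using finite_I by (auto simp: Rset_def)
  have "(\<Sum>j\<in>?A. c j ((w(i := s)) j)) = (\<Sum>j\<in>?A. c j (w j))" by (intro sum.cong) auto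
  moreover have "i \<in> Rset I (w(i := s))" using assms(1,2) by (simp add: Rset_def)
  ultimately have "tt i < (\<Sum>j\<in>?A. c j (w j))" using False unfolding keep_b_def by simp
  then have "tt i \<le> (\<Sum>j\<in>?A. min (c j (w j)) (tt i))"
    by (intro sum_min_ge finite_subset[OF A(2,1)])
  then have "real (tt i) \<le> (\<Sum>j\<in>?A. real (min (c j (w j)) (tt i)))"
    by (simp flip: of_nat_sum)
  also have "\<dots> = (\<Sum>j\<in>?A. of_bool (tt j \<le> tt i) * (if w j = 0 then 0 else real (min (c j (w j)) (tt i))))"
    by (intro sum.cong) (auto simp: Rset_def)
  also have "\<dots> \<le> trunc_load i tt w"
    unfolding trunc_load_def using A by (intro sum_mono2) auto
  finally show ?thesis using False assms(3) by (simp add: field_simps)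
qed

lemma expected_trunc_load:
  assumes "i \<in> I"
  shows "E_others i (trunc_load i tt)
       = (\<Sum>j\<in>I - {i}. of_bool (tt j \<le> tt i) * (yb j * exp_min_cost B p c j (tt i)))"
  unfolding trunc_load_def prod_expect_sum prod_expect_cmult
proof (intro sum.cong refl arg_cong2[where f = "(*)"])
  fix j assume j: "j \<in> I - {i}"
  have "{0..B} = insert 0 {1..B}" by auto
  then have "(\<Sum>s\<in>{0..B}. h_state j s * (if s = 0 then 0 else real (min (c j s) (tt i))))
      = yb j * exp_min_cost B p c j (tt i)"
    by (simp add: state_prob_def exp_min_cost_def sum_distrib_left mult_ac)
  then show "E_others i (\<lambda>w. if w j = 0 then 0 else real (min (c j (w j)) (tt i)))
      = yb j * exp_min_cost B p c j (tt i)"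
    using finite_I j pmf_family_h_state[of "I - {i}"]
    by (subst prod_expect_coord[where g = "\<lambda>s. if s = 0 then 0 else real (min (c j s) (tt i))"]) auto
qed

lemma expected_keep_b_given_times:
  assumes "i \<in> I" "s \<noteq> 0" "1 \<le> tt i"
  shows "1 - load_bound i tt \<le> E_others i (\<lambda>w. of_bool (keep_b I c (w(i := s)) tt i))"
proof -
  have fam: "pmf_family (I - {i}) (\<lambda>_. {0..B}) h_state" by (rule pmf_family_h_state) auto
  have "1 - E_others i (\<lambda>w. of_bool (keep_b I c (w(i := s)) tt i))
      = E_others i (\<lambda>w. 1 - of_bool (keep_b I c (w(i := s)) tt i))"
    using finite_I fam by (simp add: prod_expect_diff prod_expect_const)
  also have "\<dots> \<le> E_others i (\<lambda>w. trunc_load i tt w / tt i)"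
    using fam keep_b_fails_le[of i s tt, OF assms] by (intro prod_expect_mono)
  also have "\<dots> = load_bound i tt"
    unfolding prod_expect_divide expected_trunc_load[OF assms(1)] load_bound_def sum_divide_distrib
    by (simp add: mult.assoc)
  finally show ?thesis by simp
qed

lemma yb_times_prob_time_le:
  "yb j * (\<Sum>t'\<in>time_dom j. time_prob j t' * of_bool (t' \<le> t)) \<le> (\<Sum>t'\<in>{1..t}. y j t')"
proof (cases "0 < yb j")
  case True
  then have "yb j * (\<Sum>t'\<in>time_dom j. time_prob j t' * of_bool (t' \<le> t))
      = (\<Sum>t'\<in>{1..C - c j B}. if t' \<le> t then y j t' else 0)"
    unfolding time_dom_def time_prob_def sum_distrib_left by (intro sum.cong) auto
  also have "\<dots> = (\<Sum>t'\<in>{t'\<in>{1..C - c j B}. t' \<le> t}. y j t')"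
    by (rule sum.inter_filter[symmetric]) simp
  also have "\<dots> \<le> (\<Sum>t'\<in>{1..t}. y j t')"
    by (intro sum_mono2) (auto simp: y_nonneg)
  finally show ?thesis .
next
  case False
  then show ?thesis using yb_nonneg[of j] by (simp add: sum_nonneg y_nonneg)
qed

lemma expected_load_bound_given_time:
  assumes "1 \<le> t" "t \<le> C"
  shows "E_time_others i (\<lambda>tt. load_bound i (tt(i := t))) \<le> 2 * l"
proof -
  have coord: "E_time_others i (\<lambda>tt. of_bool (tt j \<le> t) * a)
      = (\<Sum>t'\<in>time_dom j. time_prob j t' * of_bool (t' \<le> t)) * a" if "j \<in> I - {i}" for j a
    using prod_expect_coord[of "I - {i}" time_dom time_prob j undefined "\<lambda>t'. of_bool (t' \<le> t) * a"]
      finite_I pmf_family_time that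
    by (simp add: sum_distrib_right mult.assoc)
  have "E_time_others i (\<lambda>tt. load_bound i (tt(i := t)))
      = (\<Sum>j\<in>I - {i}. E_time_others i
           (\<lambda>tt. of_bool (tt j \<le> t) * (yb j * exp_min_cost B p c j t / t)))"
    unfolding load_bound_def prod_expect_sum
    by (intro sum.cong refl arg_cong[where f = "E_time_others i"] ext) auto
  also have "\<dots> = (\<Sum>j\<in>I - {i}. (\<Sum>t'\<in>time_dom j. time_prob j t' * of_bool (t' \<le> t))
           * (yb j * exp_min_cost B p c j t / t))"
    by (rule sum.cong[OF refl coord])
  also have "\<dots> \<le> (\<Sum>j\<in>I - {i}. (\<Sum>t'\<in>{1..t}. y j t') * exp_min_cost B p c j t / t)"
  proof (rule sum_mono)
    fix j assume "j \<in> I - {i}"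
    then have "0 \<le> exp_min_cost B p c j t / t" by (simp add: exp_min_cost_nonneg)
    then have "yb j * (\<Sum>t'\<in>time_dom j. time_prob j t' * of_bool (t' \<le> t)) * (exp_min_cost B p c j t / t)
        \<le> (\<Sum>t'\<in>{1..t}. y j t') * (exp_min_cost B p c j t / t)"
      by (rule mult_right_mono[OF yb_times_prob_time_le])
    then show "(\<Sum>t'\<in>time_dom j. time_prob j t' * of_bool (t' \<le> t)) * (yb j * exp_min_cost B p c j t / t)
        \<le> (\<Sum>t'\<in>{1..t}. y j t') * exp_min_cost B p c j t / t"
      by (simp add: mult_ac)
  qed
  also have "\<dots> = l / t * (\<Sum>j\<in>I - {i}. exp_min_cost B p c j t * (\<Sum>t'\<in>{1..t}. x j t'))"
    by (simp add: y_eq sum_distrib_left sum_divide_distrib mult_ac)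
  also have "\<dots> \<le> l / t * (\<Sum>j\<in>I. exp_min_cost B p c j t * (\<Sum>t'\<in>{1..t}. x j t'))"
    using finite_I l_range
    by (intro mult_left_mono sum_mono2) (auto intro!: mult_nonneg_nonneg sum_nonneg x_nonneg exp_min_cost_nonneg)
  also have "\<dots> \<le> l / t * (2 * t)"
    using x_feasible assms l_range unfolding P1_feasible_def by (intro mult_left_mono) auto
  also have "\<dots> = 2 * l" using assms by simp
  finally show ?thesis .
qed

lemma expected_load_bound_le:
  assumes "i \<in> I" "0 < yb i"
  shows "E_time (load_bound i) \<le> 2 * l"
proof -
  have "E_time (load_bound i) = (\<Sum>t\<in>time_dom i. time_prob i t * E_time_others i (\<lambda>tt. load_bound i (tt(i := t))))"
    using finite_I assms(1) pmf_family_time by (intro prod_expect_remove) (auto simp: pmf_family_def)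
  also have "\<dots> \<le> (\<Sum>t\<in>time_dom i. time_prob i t * (2 * l))"
    using assms(2) pmf_family_time[of "{i}"]
    by (intro sum_mono mult_left_mono expected_load_bound_given_time) (auto simp: pmf_family_def time_dom_def)
  also have "\<dots> = 2 * l"
    using pmf_family_time[of "{i}"] by (simp add: pmf_family_def sum_distrib_right[symmetric])
  finally show ?thesis .
qed

lemma expected_keep_b_ge:
  assumes "i \<in> I" "s \<noteq> 0" "0 < yb i"
  shows "1 - 2 * l \<le> E_time (\<lambda>tt. E_others i (\<lambda>w. of_bool (keep_b I c (w(i := s)) tt i)))"
proof -
  have "1 - 2 * l \<le> 1 - E_time (load_bound i)" using expected_load_bound_le[OF assms(1,3)] by simp
  also have "\<dots> = E_time (\<lambda>tt. 1 - load_bound i tt)"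
    using finite_I pmf_family_time by (simp add: prod_expect_diff prod_expect_const)
  also have "\<dots> \<le> E_time (\<lambda>tt. E_others i (\<lambda>w. of_bool (keep_b I c (w(i := s)) tt i)))"
  proof (rule prod_expect_mono[OF pmf_family_time])
    fix tt assume "tt \<in> Pi_dflt I time_dom undefined"
    then have "1 \<le> tt i" using assms(1,3) by (auto simp: Pi_dflt_def time_dom_def)
    then show "1 - load_bound i tt \<le> E_others i (\<lambda>w. of_bool (keep_b I c (w(i := s)) tt i))"
      by (rule expected_keep_b_given_times[OF assms(1,2)])
  qed
  finally show ?thesis .
qed

lemma expected_kept_gain_given_state:
  assumes k: "k < length xs" and s: "s \<noteq> 0" "s \<le> B" and pos: "0 < yb (xs ! k)"
  defines "i \<equiv> xs ! k"
  shows "\<gamma> * (1 - 2 * l) * E_others i (\<lambda>w. gain k (w(i := s)))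
     \<le> E_others i (\<lambda>w. E_time (\<lambda>tt. gain k (w(i := s)) * crs_keep_prob i (Rset I (w(i := s)))
                                      * of_bool (keep_b I c (w(i := s)) tt i)))"
proof -
  let ?G = "\<lambda>w. gain k (w(i := s))" and ?A = "\<lambda>w. crs_keep_prob i (Rset I (w(i := s)))"
  let ?K = "\<lambda>tt w. of_bool (keep_b I c (w(i := s)) tt i) :: real"
  have i: "i \<in> I" using k xs(1) by (auto simp: i_def)
  have fin: "finite (I - {i})" using finite_I by simp
  have fam: "pmf_family (I - {i}) (\<lambda>_. {0..B}) h_state" by (rule pmf_family_h_state) auto
  have G_nonneg: "0 \<le> ?G w" if "w \<in> others_box i" for w
    using marginal_gain_nonneg[OF f_mono upd_in_vecs[OF that i s(2)]] .
  have EG_nonneg: "0 \<le> E_others i ?G" using fam G_nonneg by (rule prod_expect_nonneg)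
  have per_time: "\<gamma> * E_others i ?G * E_others i (?K tt) \<le> E_others i (\<lambda>w. ?G w * ?A w * ?K tt w)" for tt
  proof -
    have "0 \<le> E_others i (?K tt)" by (rule prod_expect_nonneg[OF fam]) simp
    then have "0 \<le> E_others i ?G * E_others i (?K tt)" using EG_nonneg by simp
    with expected_crs_keep_prob_ge[OF i s(1) pos[folded i_def]]
    have "\<gamma> * (E_others i ?G * E_others i (?K tt)) \<le> E_others i ?A * (E_others i ?G * E_others i (?K tt))"
      by (rule mult_right_mono)
    then have "\<gamma> * E_others i ?G * E_others i (?K tt) \<le> E_others i ?G * E_others i ?A * E_others i (?K tt)"
      by (simp only: mult_ac)
    also have "\<dots> \<le> E_others i (\<lambda>w. ?G w * ?A w * ?K tt w)"
      by (rule harris_inequality_3[OF fin fam gain_upd_antimono[OF k s(2), folded i_def]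
          crs_keep_prob_upd_antimono[OF i s(1)] keep_b_upd_antimono[OF i s] G_nonneg])
        (simp_all add: crs_keep_prob_def)
    finally show ?thesis .
  qed
  have "\<gamma> * (1 - 2 * l) * E_others i ?G = \<gamma> * E_others i ?G * (1 - 2 * l)" by simp
  also have "\<dots> \<le> \<gamma> * E_others i ?G * E_time (\<lambda>tt. E_others i (?K tt))"
    using expected_keep_b_ge[OF i s(1) pos[folded i_def]] EG_nonneg \<gamma>_range
    by (intro mult_left_mono) auto
  also have "\<dots> = E_time (\<lambda>tt. \<gamma> * E_others i ?G * E_others i (?K tt))"
    by (simp add: prod_expect_cmult)
  also have "\<dots> \<le> E_time (\<lambda>tt. E_others i (\<lambda>w. ?G w * ?A w * ?K tt w))"
    by (rule prod_expect_mono[OF pmf_family_time per_time])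
  also have "\<dots> = E_others i (\<lambda>w. E_time (\<lambda>tt. ?G w * ?A w * ?K tt w))"
    by (rule prod_expect_swap)
  finally show ?thesis .
qed

lemma expected_kept_gain_ge:
  assumes k: "k < length xs"
  shows "\<gamma> * (1 - 2 * l) * E_state (gain k)
     \<le> E_state (\<lambda>v. E_time (\<lambda>tt. gain k v * crs_keep_prob (xs ! k) (Rset I v)
                                  * of_bool (keep_b I c v tt (xs ! k))))"
proof -
  let ?i = "xs ! k"
  have i: "?i \<in> I" using k xs(1) by auto
  have split: "E_state g = (\<Sum>s\<in>{0..B}. h_state ?i s * E_others ?i (\<lambda>w. g (w(?i := s))))" for g
    using finite_I i by (intro prod_expect_remove) auto
  have per_state: "h_state ?i s * (\<gamma> * (1 - 2 * l) * E_others ?i (\<lambda>w. gain k (w(?i := s))))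
      \<le> h_state ?i s * E_others ?i (\<lambda>w. E_time (\<lambda>tt. gain k (w(?i := s))
            * crs_keep_prob ?i (Rset I (w(?i := s))) * of_bool (keep_b I c (w(?i := s)) tt ?i)))"
    if s: "s \<in> {0..B}" for s
  proof (cases "s = 0 \<or> yb ?i = 0")
    case True
    text \<open>Either \<open>i\<close> is absent, and its marginal gain vanishes, or it is never drawn.\<close>
    then show ?thesis
      by (auto simp: marginal_gain_eq_0[OF k] state_prob_def prod_expect_def)
  next
    case False
    then have "0 < yb ?i" using yb_nonneg[of ?i] by simp
    then show ?thesis
      using False s pmf_family_h_state[of I] i expected_kept_gain_given_state[OF k]
      by (intro mult_left_mono) (auto simp: pmf_family_def)
  qed
  have "\<gamma> * (1 - 2 * l) * E_state (gain k)
      = (\<Sum>s\<in>{0..B}. h_state ?i s * (\<gamma> * (1 - 2 * l) * E_others ?i (\<lambda>w. gain k (w(?i := s)))))"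
    unfolding split[of "gain k"] sum_distrib_left by (simp add: mult_ac)
  also have "\<dots> \<le> (\<Sum>s\<in>{0..B}. h_state ?i s * E_others ?i (\<lambda>w. E_time (\<lambda>tt. gain k (w(?i := s))
            * crs_keep_prob ?i (Rset I (w(?i := s))) * of_bool (keep_b I c (w(?i := s)) tt ?i))))"
    using per_state by (rule sum_mono)
  also have "\<dots> = E_state (\<lambda>v. E_time (\<lambda>tt. gain k v * crs_keep_prob ?i (Rset I v)
                                          * of_bool (keep_b I c v tt ?i)))"
    unfolding split[of "\<lambda>v. E_time (\<lambda>tt. gain k v * crs_keep_prob ?i (Rset I v) * of_bool (keep_b I c v tt ?i))"] ..
  finally show ?thesis .
qed

theorem expected_psi_c_ge:
  "(1 - min (2 * \<beta>) (1/2)) * \<gamma> * multilinear_ext I (fbar I B p f) (xbar B C c y)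
     \<le> expected_psi_c I B p c C chi f y"
proof -
  let ?a = "\<gamma> * (1 - 2 * l)"
  have a: "0 \<le> ?a" "?a \<le> 1" using l_range \<gamma>_range by (auto intro: mult_le_one)
  have f0: "0 \<le> f (\<lambda>_. 0)" using f_nonneg by (auto simp: vecs_def)
  have "(1 - min (2 * \<beta>) (1/2)) * \<gamma> * multilinear_ext I (fbar I B p f) (xbar B C c y)
      = ?a * f (\<lambda>_. 0) + (\<Sum>k<length xs. ?a * E_state (gain k))"
    unfolding yb_def[symmetric] multilinear_ext_eq_sum_gain l_range(3)[symmetric]
    by (simp add: algebra_simps sum_distrib_left)
  also have "\<dots> \<le> f (\<lambda>_. 0) + (\<Sum>k<length xs. E_state (\<lambda>v. E_time (\<lambda>tt.
        gain k v * crs_keep_prob (xs ! k) (Rset I v) * of_bool (keep_b I c v tt (xs ! k)))))"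
    using a f0 expected_kept_gain_ge
    by (intro add_mono sum_mono) (auto simp: mult_left_le_one_le)
  also have "\<dots> \<le> expected_psi_c I B p c C chi f y"
    by (rule expected_psi_c_ge_sum)
  finally show ?thesis .
qed

end

theorem lemma6:
  fixes I :: "'i set" and B C :: nat
    and f :: "('i \<Rightarrow> nat) \<Rightarrow> real"
    and p :: "'i \<Rightarrow> nat \<Rightarrow> real"
    and c :: "'i \<Rightarrow> nat \<Rightarrow> nat"
    and Iout :: "'i set set"
    and \<beta> \<gamma> :: real
    and chi :: "('i \<Rightarrow> real) \<Rightarrow> 'i set \<Rightarrow> 'i set pmf"
    and y :: "'i \<Rightarrow> nat \<Rightarrow> real"
  assumes finI: "finite I"
    and B_pos: "B > 0" and C_pos: "C > 0"
    and f_nonneg: "\<forall>u\<in>vecs I B. f u \<ge> 0"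
    and f_mono: "monotone_vec I B f"
    and f_sub: "lattice_submodular I B f"
    and p_nonneg: "\<forall>i\<in>I. \<forall>s\<in>{1..B}. p i s \<ge> 0"
    and p_sum: "\<forall>i\<in>I. (\<Sum>s\<in>{1..B}. p i s) = 1"
    and c_mono: "\<forall>i\<in>I. \<forall>s\<in>{1..B}. \<forall>s'\<in>{1..B}. s' \<le> s \<longrightarrow> c i s' \<le> c i s"
    and Iout_dc: "downward_closed I Iout"
    and \<beta>_range: "0 \<le> \<beta>" "\<beta> \<le> 1"
    and \<gamma>_range: "0 \<le> \<gamma>" "\<gamma> \<le> 1"
    and crs: "monotone_balanced_CRS I Iout \<beta> \<gamma> chi"
    and y_def: "\<exists>x. P1_feasible I B p c C Iout x \<and> y = (\<lambda>i t. min \<beta> (1/4) * x i t)"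
  shows "expected_psi_c I B p c C chi f y
           \<ge> (1 - min (2 * \<beta>) (1/2)) * \<gamma> * multilinear_ext I (fbar I B p f) (xbar B C c y)"
proof -
  obtain x where x: "P1_feasible I B p c C Iout x" "y = (\<lambda>i t. min \<beta> (1/4) * x i t)"
    using y_def by blast
  obtain xs where xs: "set xs = I" "distinct xs"
    using finite_distinct_list[OF finI] by blast
  interpret psi_c_setting I B C f p c Iout \<beta> \<gamma> chi x y xs
    using xs assms(4-15) x by unfold_locales
  show ?thesis by (rule expected_psi_c_ge)
qed

end
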